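(* Let $B$ be a finite set of Boolean functions. Then there exists a monadic second-order (MSO) formula $\theta_{\mathit{sat}}$ over the vocabulary $\tau_{B,\mathit{prop}}$ such that for every set $\Gamma$ of propositional $B$-formulae it holds that $\Gamma$ is satisfiable if and only if $\mathcal{A}_\Gamma \models \theta_{\mathit{sat}}$.
   Context: For a finite set $B$ of Boolean functions, a $B$-formula is a propositional formula built from propositional variables by applying functions $f\in B$ (0-ary functions of $B$ act as constants). Let $\tau_B$ be the vocabulary consisting of a unary relation symbol $\mathrm{const}_f$ for each $f\in B$ of arity $0$ and a binary relation symbol $\mathrm{conn}_{f,i}$ for each $f\in B$ and each $1\le i\le \mathrm{arity}(f)$. Let $\tau_{B,\mathit{prop}}=\tau_B\cup\{\mathrm{var},\mathrm{repr}\}$ with $\mathrm{var},\mathrm{repr}$ unary. For a set $\Gamma$ of $B$-formulae, $\mathcal{A}_\Gamma$ is the $\tau_{B,\mathit{prop}}$-structure whose universe is the set of subformulae of the formulae in $\Gamma$, where $\mathrm{var}(x)$ holds iff $x$ is a variable, $\mathrm{repr}(x)$ holds iff $x\in\Gamma$, $\mathrm{const}_f(x)$ holds iff $x$ is the constant $f$, and $\mathrm{conn}_{f,i}(x,y)$ holds iff $x$ is the $i$-th argument of the function $f$ at the root of the formula $y$. *)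

theory Defs
  imports Main
begin

text \<open>A Boolean function is given by its arity n together with a map on bool lists;
  only its values on lists of length n are ever used.\<close>
type_synonym bfun = "nat \<times> (bool list \<Rightarrow> bool)"

definition arity :: "bfun \<Rightarrow> nat" where "arity f = fst f"
definition bapply :: "bfun \<Rightarrow> bool list \<Rightarrow> bool" where "bapply f = snd f"

datatype 'v bform = PVar 'v | App bfun "'v bform list"

fun is_Bformula :: "bfun set \<Rightarrow> 'v bform \<Rightarrow> bool" where
  "is_Bformula B (PVar v) = True"
| "is_Bformula B (App f args) =
     (f \<in> B \<and> length args = arity f \<and> (\<forall>a\<in>set args. is_Bformula B a))"

fun eval :: "('v \<Rightarrow> bool) \<Rightarrow> 'v bform \<Rightarrow> bool" where
  "eval \<sigma> (PVar v) = \<sigma> v"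
| "eval \<sigma> (App f args) = bapply f (map (eval \<sigma>) args)"

definition satisfiable :: "'v bform set \<Rightarrow> bool" where
  "satisfiable \<Gamma> \<longleftrightarrow> (\<exists>\<sigma>. \<forall>\<phi>\<in>\<Gamma>. eval \<sigma> \<phi>)"

fun subforms :: "'v bform \<Rightarrow> 'v bform set" where
  "subforms (PVar v) = {PVar v}"
| "subforms (App f args) = insert (App f args) (\<Union>a\<in>set args. subforms a)"

datatype rsym = RVar | RRepr | RConst bfun | RConn bfun nat

fun rarity :: "rsym \<Rightarrow> nat" where
  "rarity RVar = 1"
| "rarity RRepr = 1"
| "rarity (RConst f) = 1"
| "rarity (RConn f i) = 2"

definition tau_B :: "bfun set \<Rightarrow> rsym set" where
  "tau_B B = {RConst f | f. f \<in> B \<and> arity f = 0}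
           \<union> {RConn f i | f i. f \<in> B \<and> 1 \<le> i \<and> i \<le> arity f}"

definition tau_B_prop :: "bfun set \<Rightarrow> rsym set" where
  "tau_B_prop B = tau_B B \<union> {RVar, RRepr}"

text \<open>First-order variables and set (monadic second-order) variables are both
  indexed by naturals, in separate namespaces.\<close>
datatype mso =
    Rel rsym "nat list"
  | Eq nat nat
  | Mem nat nat
  | Neg mso
  | Conj mso mso
  | ExFO nat mso
  | ExSO nat mso

fun fo_free :: "mso \<Rightarrow> nat set" where
  "fo_free (Rel r xs) = set xs"
| "fo_free (Eq x y) = {x, y}"
| "fo_free (Mem x X) = {x}"
| "fo_free (Neg \<phi>) = fo_free \<phi>"
| "fo_free (Conj \<phi> \<psi>) = fo_free \<phi> \<union> fo_free \<psi>"
| "fo_free (ExFO x \<phi>) = fo_free \<phi> - {x}"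
| "fo_free (ExSO X \<phi>) = fo_free \<phi>"

fun so_free :: "mso \<Rightarrow> nat set" where
  "so_free (Rel r xs) = {}"
| "so_free (Eq x y) = {}"
| "so_free (Mem x X) = {X}"
| "so_free (Neg \<phi>) = so_free \<phi>"
| "so_free (Conj \<phi> \<psi>) = so_free \<phi> \<union> so_free \<psi>"
| "so_free (ExFO x \<phi>) = so_free \<phi>"
| "so_free (ExSO X \<phi>) = so_free \<phi> - {X}"

definition mso_sentence :: "mso \<Rightarrow> bool" where
  "mso_sentence \<phi> \<longleftrightarrow> fo_free \<phi> = {} \<and> so_free \<phi> = {}"

fun mso_over :: "rsym set \<Rightarrow> mso \<Rightarrow> bool" where
  "mso_over R (Rel r xs) = (r \<in> R \<and> length xs = rarity r)"
| "mso_over R (Eq x y) = True"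
| "mso_over R (Mem x X) = True"
| "mso_over R (Neg \<phi>) = mso_over R \<phi>"
| "mso_over R (Conj \<phi> \<psi>) = (mso_over R \<phi> \<and> mso_over R \<psi>)"
| "mso_over R (ExFO x \<phi>) = mso_over R \<phi>"
| "mso_over R (ExSO X \<phi>) = mso_over R \<phi>"

fun msat :: "'a set \<Rightarrow> (rsym \<Rightarrow> 'a list \<Rightarrow> bool) \<Rightarrow> (nat \<Rightarrow> 'a) \<Rightarrow> (nat \<Rightarrow> 'a set)
              \<Rightarrow> mso \<Rightarrow> bool" where
  "msat U I fo so (Rel r xs) = I r (map fo xs)"
| "msat U I fo so (Eq x y) = (fo x = fo y)"
| "msat U I fo so (Mem x X) = (fo x \<in> so X)"
| "msat U I fo so (Neg \<phi>) = (\<not> msat U I fo so \<phi>)"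
| "msat U I fo so (Conj \<phi> \<psi>) = (msat U I fo so \<phi> \<and> msat U I fo so \<psi>)"
| "msat U I fo so (ExFO x \<phi>) = (\<exists>a\<in>U. msat U I (fo(x := a)) so \<phi>)"
| "msat U I fo so (ExSO X \<phi>) = (\<exists>A. A \<subseteq> U \<and> msat U I fo (so(X := A)) \<phi>)"

text \<open>Truth of a sentence in a structure (assignments are irrelevant for sentences).\<close>
definition models :: "'a set \<Rightarrow> (rsym \<Rightarrow> 'a list \<Rightarrow> bool) \<Rightarrow> mso \<Rightarrow> bool" where
  "models U I \<phi> \<longleftrightarrow> msat U I (\<lambda>_. undefined) (\<lambda>_. {}) \<phi>"

definition A_univ :: "'v bform set \<Rightarrow> 'v bform set" where
  "A_univ \<Gamma> = (\<Union>\<phi>\<in>\<Gamma>. subforms \<phi>)"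

fun A_rel :: "'v bform set \<Rightarrow> rsym \<Rightarrow> 'v bform list \<Rightarrow> bool" where
  "A_rel \<Gamma> RVar [x] = (\<exists>v. x = PVar v)"
| "A_rel \<Gamma> RRepr [x] = (x \<in> \<Gamma>)"
| "A_rel \<Gamma> (RConst f) [x] = (arity f = 0 \<and> x = App f [])"
| "A_rel \<Gamma> (RConn f i) [x, y] =
     (\<exists>args. y = App f args \<and> 1 \<le> i \<and> i \<le> length args \<and> args ! (i - 1) = x)"
| "A_rel \<Gamma> _ _ = False"

end

theory Submission
  imports Defs
begin

text \<open>An assignment \<sigma> satisfies \<Gamma> exactly when the set of subformulae true under \<sigma> is a
  truth labelling: a set of subformulae containing \<Gamma> that is locally consistent with the
  Boolean function at every inner node. Conversely every truth labelling is the set of true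
  subformulae of the assignment read off at the variable nodes. Existence of such a set of
  nodes is expressible in MSO: quantify a set variable X, require \<Gamma> \<subseteq> X via repr, and check
  local consistency at a node x rooted at f \<in> B by going through the finitely many rows of
  the truth table of f, reading the labels of the arguments via the conn relations.\<close>

definition mso_true :: mso where
  "mso_true = Neg (ExFO 0 (Neg (Eq 0 0)))"

definition mso_imp :: "mso \<Rightarrow> mso \<Rightarrow> mso" where
  "mso_imp \<phi> \<psi> = Neg (Conj \<phi> (Neg \<psi>))"

definition mso_all :: "nat \<Rightarrow> mso \<Rightarrow> mso" where
  "mso_all x \<phi> = Neg (ExFO x (Neg \<phi>))"

fun mso_conj_list :: "mso list \<Rightarrow> mso" where
  "mso_conj_list [] = mso_true"
| "mso_conj_list (\<phi> # \<phi>s) = Conj \<phi> (mso_conj_list \<phi>s)"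

lemma msat_mso_imp [simp]:
  "msat U I fo so (mso_imp \<phi> \<psi>) \<longleftrightarrow> (msat U I fo so \<phi> \<longrightarrow> msat U I fo so \<psi>)"
  by (simp add: mso_imp_def)

lemma msat_mso_all [simp]:
  "msat U I fo so (mso_all x \<phi>) \<longleftrightarrow> (\<forall>a\<in>U. msat U I (fo(x := a)) so \<phi>)"
  by (simp add: mso_all_def)

lemma msat_mso_conj_list [simp]:
  "msat U I fo so (mso_conj_list \<phi>s) \<longleftrightarrow> (\<forall>\<phi>\<in>set \<phi>s. msat U I fo so \<phi>)"
  by (induction \<phi>s) (auto simp: mso_true_def)

lemma fo_free_mso_conj_list [simp]:
  "fo_free (mso_conj_list \<phi>s) = (\<Union>\<phi>\<in>set \<phi>s. fo_free \<phi>)"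
  by (induction \<phi>s) (auto simp: mso_true_def)

lemma so_free_mso_conj_list [simp]:
  "so_free (mso_conj_list \<phi>s) = (\<Union>\<phi>\<in>set \<phi>s. so_free \<phi>)"
  by (induction \<phi>s) (auto simp: mso_true_def)

lemma mso_over_mso_conj_list [simp]:
  "mso_over R (mso_conj_list \<phi>s) \<longleftrightarrow> (\<forall>\<phi>\<in>set \<phi>s. mso_over R \<phi>)"
  by (induction \<phi>s) (auto simp: mso_true_def)

lemma subforms_refl: "\<phi> \<in> subforms \<phi>"
  by (cases \<phi>) auto

lemma subforms_trans: "\<psi> \<in> subforms \<phi> \<Longrightarrow> subforms \<psi> \<subseteq> subforms \<phi>"
  by (induction \<phi>) auto

lemma is_Bformula_subforms: "is_Bformula B \<phi> \<Longrightarrow> \<psi> \<in> subforms \<phi> \<Longrightarrow> is_Bformula B \<psi>"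
  by (induction \<phi>) auto

lemma subset_A_univ: "\<Gamma> \<subseteq> A_univ \<Gamma>"
  unfolding A_univ_def using subforms_refl by blast

lemma A_univ_arg: "App f args \<in> A_univ \<Gamma> \<Longrightarrow> a \<in> set args \<Longrightarrow> a \<in> A_univ \<Gamma>"
  unfolding A_univ_def using subforms_trans subforms_refl by fastforce

lemma is_Bformula_A_univ:
  "\<forall>\<phi>\<in>\<Gamma>. is_Bformula B \<phi> \<Longrightarrow> x \<in> A_univ \<Gamma> \<Longrightarrow> is_Bformula B x"
  unfolding A_univ_def using is_Bformula_subforms by blast

definition truth_labelling :: "'v bform set \<Rightarrow> 'v bform set \<Rightarrow> bool" where
  "truth_labelling \<Gamma> T \<longleftrightarrow> T \<subseteq> A_univ \<Gamma> \<and> \<Gamma> \<subseteq> T \<and>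
     (\<forall>f args. App f args \<in> A_univ \<Gamma> \<longrightarrow>
        (App f args \<in> T \<longleftrightarrow> bapply f (map (\<lambda>a. a \<in> T) args)))"

lemma truth_labellingD:
  "truth_labelling \<Gamma> T \<Longrightarrow> App f args \<in> A_univ \<Gamma> \<Longrightarrow>
    App f args \<in> T \<longleftrightarrow> bapply f (map (\<lambda>a. a \<in> T) args)"
  unfolding truth_labelling_def by blast

lemma truth_labelling_true_subforms:
  assumes "\<forall>\<phi>\<in>\<Gamma>. eval \<sigma> \<phi>"
  shows "truth_labelling \<Gamma> {\<phi> \<in> A_univ \<Gamma>. eval \<sigma> \<phi>}" (is "truth_labelling \<Gamma> ?T")
proof -
  have "App f args \<in> ?T \<longleftrightarrow> bapply f (map (\<lambda>a. a \<in> ?T) args)"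
    if "App f args \<in> A_univ \<Gamma>" for f args
  proof -
    have "App f args \<in> ?T \<longleftrightarrow> bapply f (map (eval \<sigma>) args)"
      using that by simp
    also have "map (eval \<sigma>) args = map (\<lambda>a. a \<in> ?T) args"
      using A_univ_arg[OF that] by (auto intro!: map_cong)
    finally show ?thesis .
  qed
  with assms subset_A_univ show ?thesis
    unfolding truth_labelling_def by blast
qed

lemma truth_labelling_satisfiable:
  assumes T: "truth_labelling \<Gamma> T"
  shows "satisfiable \<Gamma>"
proof -
  define \<sigma> where "\<sigma> v \<longleftrightarrow> PVar v \<in> T" for v
  have "\<phi> \<in> T \<longleftrightarrow> eval \<sigma> \<phi>" if "\<phi> \<in> A_univ \<Gamma>" for \<phi>
    using that
  proof (induction \<phi>)
    case (PVar v)
    then show ?case by (simp add: \<sigma>_def)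
  next
    case (App f args)
    have "App f args \<in> T \<longleftrightarrow> bapply f (map (\<lambda>a. a \<in> T) args)"
      using truth_labellingD[OF T App.prems] .
    also have "map (\<lambda>a. a \<in> T) args = map (eval \<sigma>) args"
      by (intro map_cong) (use App.IH App.prems A_univ_arg in blast)+
    finally show ?case by simp
  qed
  then show ?thesis
    using T subset_A_univ unfolding truth_labelling_def satisfiable_def by blast
qed

lemma satisfiable_iff_truth_labelling: "satisfiable \<Gamma> \<longleftrightarrow> (\<exists>T. truth_labelling \<Gamma> T)"
  using truth_labelling_true_subforms truth_labelling_satisfiable
  unfolding satisfiable_def by blast

text \<open>First-order variable 0 ranges over the node under inspection, first-order variable 1
  over one of its arguments, and set variable 0 holds the truth labelling.\<close>

definition label_is :: "nat \<Rightarrow> bool \<Rightarrow> mso" where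
  "label_is x b = (if b then Mem x 0 else Neg (Mem x 0))"

definition arg_label_is :: "bfun \<Rightarrow> nat \<Rightarrow> bool \<Rightarrow> mso" where
  "arg_label_is f i b = ExFO 1 (Conj (Rel (RConn f (Suc i)) [1, 0]) (label_is 1 b))"

text \<open>A node of positive arity is recognised through its first argument.\<close>
definition root_is :: "bfun \<Rightarrow> mso" where
  "root_is f = (if arity f = 0 then Rel (RConst f) [0] else ExFO 1 (Rel (RConn f 1) [1, 0]))"

definition consistent_row :: "bfun \<Rightarrow> bool list \<Rightarrow> mso" where
  "consistent_row f bs =
     mso_imp (mso_conj_list (map (\<lambda>i. arg_label_is f i (bs ! i)) [0..<arity f]))
             (label_is 0 (bapply f bs))"

definition consistent_at :: "bfun \<Rightarrow> mso" where
  "consistent_at f = mso_imp (root_is f)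
     (mso_conj_list (map (consistent_row f) (List.n_lists (arity f) [True, False])))"

definition theta_sat :: "bfun list \<Rightarrow> mso" where
  "theta_sat fs = ExSO 0 (Conj (mso_all 0 (mso_conj_list (map consistent_at fs)))
                               (mso_all 0 (mso_imp (Rel RRepr [0]) (Mem 0 0))))"

lemma mso_sentence_theta_sat: "mso_sentence (theta_sat fs)"
proof -
  have "fo_free (consistent_at f) \<subseteq> {0} \<and> so_free (consistent_at f) \<subseteq> {0}" for f
    by (auto simp: consistent_at_def consistent_row_def root_is_def arg_label_is_def label_is_def
        mso_imp_def split: if_splits)
  then show ?thesis
    by (fastforce simp: mso_sentence_def theta_sat_def mso_all_def mso_imp_def)
qed

lemma mso_over_theta_sat:
  assumes "set fs \<subseteq> B"
  shows "mso_over (tau_B_prop B) (theta_sat fs)"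
proof -
  have "mso_over (tau_B_prop B) (consistent_at f)" if "f \<in> B" for f
  proof -
    have "arity f = 0 \<Longrightarrow> RConst f \<in> tau_B_prop B"
      and "i < arity f \<Longrightarrow> RConn f (Suc i) \<in> tau_B_prop B" for i
      using that unfolding tau_B_prop_def tau_B_def by (auto simp del: split_paired_Ex)
    then show ?thesis
      by (auto simp: consistent_at_def consistent_row_def root_is_def arg_label_is_def label_is_def
          mso_imp_def split: if_splits)
  qed
  then show ?thesis
    using assms by (auto simp: theta_sat_def mso_all_def mso_imp_def tau_B_prop_def)
qed

lemma msat_arg_label_is:
  assumes "fo 0 = App f args" "App f args \<in> A_univ \<Gamma>" "i < length args"
  shows "msat (A_univ \<Gamma>) (A_rel \<Gamma>) fo so (arg_label_is f i b) \<longleftrightarrow> (args ! i \<in> so 0 \<longleftrightarrow> b)"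
proof -
  have "args ! i \<in> A_univ \<Gamma>"
    using A_univ_arg assms(2,3) nth_mem by blast
  then show ?thesis
    using assms by (auto simp: arg_label_is_def label_is_def)
qed

lemma msat_root_is:
  assumes "fo 0 = x" "x \<in> A_univ \<Gamma>" "is_Bformula B x"
  shows "msat (A_univ \<Gamma>) (A_rel \<Gamma>) fo so (root_is f) \<longleftrightarrow> (\<exists>args. x = App f args)"
proof (cases "arity f = 0")
  case True
  with assms show ?thesis by (auto simp: root_is_def)
next
  case False
  have "msat (A_univ \<Gamma>) (A_rel \<Gamma>) fo so (root_is f)" if "x = App f args" for args
  proof -
    have "args \<noteq> []"
      using assms(3) that False by auto
    then have "args ! 0 \<in> A_univ \<Gamma>"
      using A_univ_arg assms(2) that by (metis length_greater_0_conv nth_mem)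
    with assms that \<open>args \<noteq> []\<close> False show ?thesis
      by (auto simp: root_is_def)
  qed
  with False assms(1) show ?thesis
    by (auto simp: root_is_def)
qed

lemma msat_consistent_at:
  assumes "fo 0 = x" "x \<in> A_univ \<Gamma>" "is_Bformula B x"
  shows "msat (A_univ \<Gamma>) (A_rel \<Gamma>) fo so (consistent_at f) \<longleftrightarrow>
    (\<forall>args. x = App f args \<longrightarrow> (x \<in> so 0 \<longleftrightarrow> bapply f (map (\<lambda>a. a \<in> so 0) args)))"
proof -
  have rows: "(\<forall>bs\<in>set (List.n_lists (arity f) [True, False]).
                msat (A_univ \<Gamma>) (A_rel \<Gamma>) fo so (consistent_row f bs))
    \<longleftrightarrow> (x \<in> so 0 \<longleftrightarrow> bapply f (map (\<lambda>a. a \<in> so 0) args))"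
    if x: "x = App f args" for args
  proof -
    have len: "length args = arity f"
      using assms(3) x by simp
    have arg: "msat (A_univ \<Gamma>) (A_rel \<Gamma>) fo so (arg_label_is f i b) \<longleftrightarrow> (args ! i \<in> so 0 \<longleftrightarrow> b)"
      if "i < arity f" for i b
      using msat_arg_label_is[of fo f args] assms(1,2) x that len by simp
    have "msat (A_univ \<Gamma>) (A_rel \<Gamma>) fo so (consistent_row f bs) \<longleftrightarrow>
        (bs = map (\<lambda>a. a \<in> so 0) args \<longrightarrow> (x \<in> so 0 \<longleftrightarrow> bapply f bs))"
      if "length bs = arity f" for bs
    proof -
      have "(\<forall>i<arity f. args ! i \<in> so 0 \<longleftrightarrow> bs ! i) \<longleftrightarrow> bs = map (\<lambda>a. a \<in> so 0) args"
        using that len by (auto simp: list_eq_iff_nth_eq)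
      then show ?thesis
        using assms(1) by (auto simp: consistent_row_def label_is_def arg)
    qed
    then show ?thesis
      using len by (auto simp: set_n_lists)
  qed
  show ?thesis
    unfolding consistent_at_def msat_mso_imp msat_mso_conj_list
      msat_root_is[where fo=fo and x=x and so=so, OF assms]
    using rows by auto
qed

lemma models_theta_sat_iff:
  assumes "set fs = B" and B: "\<forall>\<phi>\<in>\<Gamma>. is_Bformula B \<phi>"
  shows "models (A_univ \<Gamma>) (A_rel \<Gamma>) (theta_sat fs) \<longleftrightarrow> (\<exists>T. truth_labelling \<Gamma> T)"
proof -
  let ?U = "A_univ \<Gamma>" and ?I = "A_rel \<Gamma>"
  have consistent: "(\<forall>x\<in>?U. \<forall>f\<in>B. msat ?U ?I (fo(0 := x)) (so(0 := T)) (consistent_at f))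
    \<longleftrightarrow> (\<forall>f args. App f args \<in> ?U \<longrightarrow>
          (App f args \<in> T \<longleftrightarrow> bapply f (map (\<lambda>a. a \<in> T) args)))" for fo so T
  proof -
    have "msat ?U ?I (fo(0 := x)) (so(0 := T)) (consistent_at f) \<longleftrightarrow>
        (\<forall>args. x = App f args \<longrightarrow> (x \<in> T \<longleftrightarrow> bapply f (map (\<lambda>a. a \<in> T) args)))"
      if "x \<in> ?U" for x f
      using msat_consistent_at[of "fo(0 := x)" x \<Gamma> B "so(0 := T)" f]
        that is_Bformula_A_univ[OF B that] by simp
    then show ?thesis
      using is_Bformula_A_univ[OF B] by fastforce
  qed
  have repr: "(\<forall>x\<in>?U. x \<in> \<Gamma> \<longrightarrow> x \<in> T) \<longleftrightarrow> \<Gamma> \<subseteq> T" for T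
    using subset_A_univ by blast
  show ?thesis
    using assms(1)
    by (simp add: models_def theta_sat_def consistent repr truth_labelling_def conj_commute)
qed

theorem lemma1:
  fixes B :: "bfun set"
  assumes "finite B"
  shows "\<exists>\<theta>. mso_sentence \<theta> \<and> mso_over (tau_B_prop B) \<theta> \<and>
           (\<forall>\<Gamma> :: 'v bform set. (\<forall>\<phi>\<in>\<Gamma>. is_Bformula B \<phi>) \<longrightarrow>
              (satisfiable \<Gamma> \<longleftrightarrow> models (A_univ \<Gamma>) (A_rel \<Gamma>) \<theta>))"
proof -
  obtain fs where fs: "set fs = B"
    using finite_list[OF assms] by blast
  show ?thesis
  proof (intro exI conjI allI impI)
    show "mso_sentence (theta_sat fs)"
      by (rule mso_sentence_theta_sat)
    show "mso_over (tau_B_prop B) (theta_sat fs)"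
      using fs by (simp add: mso_over_theta_sat)
    show "satisfiable \<Gamma> \<longleftrightarrow> models (A_univ \<Gamma>) (A_rel \<Gamma>) (theta_sat fs)"
      if "\<forall>\<phi>\<in>\<Gamma>. is_Bformula B \<phi>" for \<Gamma> :: "'v bform set"
      using models_theta_sat_iff[OF fs that] satisfiable_iff_truth_labelling by blast
  qed
qed

end
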